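(* Let $n\in\mathbb{N}$, let $\mathbf{s}=(s_0,\ldots,s_n)\subset[0,\infty)$ be strictly positive on $(0,1]$ and let $s_{-1}\in[0,\infty)$. Then $\mathbf{s}'=(s_{-1},s_0,\ldots,s_n)$ (viewed as a sequence of length $n+2$ with $s_{-1}$ as its zeroth term) is strictly positive on $(0,1]$ if and only if $s_{-1}\in(t_1(\mathbf{s}),\infty)$.
   Context: For $a<b$ and $\mathbf{s}=(s_0,\ldots,s_n)$ let $\sigma(x^k)=s_k$ define a linear functional on real polynomials of degree $\le n$. $\mathbf{s}$ is positive on $[a,b]$ if $\sigma(P)\ge0$ for every such $P$ nonnegative on $[a,b]$, strictly positive if moreover $\sigma(P)>0$ for every such $P\not\equiv0$. Strictly positive on $(0,1]$ means strictly positive on some $[a,b]$ with $0<a<b\le1$. $\mathcal{M}_{a,b}(\mathbf{s})$ is the set of positive Borel measures on $[a,b]$ with $k$-th moments $s_k$ ($k=0,\ldots,n$); $t_{a,b}(\mathbf{s})=\inf\{\int_{[a,b]}\frac1t\,d\mu:\mu\in\mathcal{M}_{a,b}(\mathbf{s})\}$ with $\inf\varnothing=\infty$, and $t_1(\mathbf{s})=\inf_{0<a<b\le1}t_{a,b}(\mathbf{s})$. *)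

theory Defs
  imports "HOL-Analysis.Analysis" "HOL-Probability.Probability" "HOL-Computational_Algebra.Polynomial"
begin

definition mom_fun :: "nat \<Rightarrow> (nat \<Rightarrow> real) \<Rightarrow> real poly \<Rightarrow> real" where
  "mom_fun n s P = (\<Sum>k\<le>n. coeff P k * s k)"

definition nonneg_on :: "real poly \<Rightarrow> real \<Rightarrow> real \<Rightarrow> bool" where
  "nonneg_on P a b \<longleftrightarrow> (\<forall>x\<in>{a..b}. poly P x \<ge> 0)"

definition positive_on :: "nat \<Rightarrow> (nat \<Rightarrow> real) \<Rightarrow> real \<Rightarrow> real \<Rightarrow> bool" where
  "positive_on n s a b \<longleftrightarrow>
     (\<forall>P. degree P \<le> n \<and> nonneg_on P a b \<longrightarrow> mom_fun n s P \<ge> 0)"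

definition strictly_positive_on :: "nat \<Rightarrow> (nat \<Rightarrow> real) \<Rightarrow> real \<Rightarrow> real \<Rightarrow> bool" where
  "strictly_positive_on n s a b \<longleftrightarrow> positive_on n s a b \<and>
     (\<forall>P. degree P \<le> n \<and> nonneg_on P a b \<and> P \<noteq> 0 \<longrightarrow> mom_fun n s P > 0)"

text \<open>Strictly positive on (0,1]: strictly positive on some [a,b] with 0 < a < b <= 1.\<close>
definition strictly_positive_01 :: "nat \<Rightarrow> (nat \<Rightarrow> real) \<Rightarrow> bool" where
  "strictly_positive_01 n s \<longleftrightarrow>
     (\<exists>a b. 0 < a \<and> a < b \<and> b \<le> 1 \<and> strictly_positive_on n s a b)"

definition rep_measures :: "nat \<Rightarrow> (nat \<Rightarrow> real) \<Rightarrow> real \<Rightarrow> real \<Rightarrow> real measure set" where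
  "rep_measures n s a b = {M. sets M = sets borel \<and> finite_measure M \<and>
       emeasure M (UNIV - {a..b}) = 0 \<and>
       (\<forall>k\<le>n. integral\<^sup>L M (\<lambda>x. x ^ k) = s k)}"

definition t_ab :: "nat \<Rightarrow> (nat \<Rightarrow> real) \<Rightarrow> real \<Rightarrow> real \<Rightarrow> ereal" where
  "t_ab n s a b = (INF M\<in>rep_measures n s a b. ereal (integral\<^sup>L M (\<lambda>t. 1 / t)))"

definition t_1 :: "nat \<Rightarrow> (nat \<Rightarrow> real) \<Rightarrow> ereal" where
  "t_1 n s = (INF ab\<in>{(a, b). 0 < a \<and> a < b \<and> b \<le> (1::real)}. t_ab n s (fst ab) (snd ab))"

end

theory Submission
  imports Defs
begin

text \<open>
  A strictly positive functional \<sigma> on polynomials of degree at most n has a margin on [a, b]: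
  \<sigma>(P) \<ge> \<delta> (|p_0| + ... + |p_n|) for every P \<ge> 0 on [a, b], by compactness.
  If s' is strictly positive on [a, b] \<subseteq> (0, 1], lowering s_{-1} by \<delta> keeps it positive.
  A positive functional on [a, b] is integration against finitely many atoms (its nearest point
  in the moment cone, which is closed by Caratheodory's theorem, coincides with it), and dividing
  the weights by the atoms gives a representing measure of s on [a, b] with
  \<integral>1/t = s_{-1} - \<delta>; hence t_1(s) < s_{-1}.

  Conversely, let \<mu> represent s on [a, b] with \<integral>1/t d\<mu> < s_{-1} and write P = p_0 + x Q.
  If p_0 \<ge> 0 then \<sigma>'(P) = p_0 (s_{-1} - \<integral>1/t d\<mu>) + \<integral>P/t d\<mu>; if p_0 < 0, the margin of s
  on an interval [a_0, b_0] of strict positivity dominates p_0 s_{-1} as soon as the interval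
  reaches down to some small \<alpha>. So s' is strictly positive on [\<alpha>, max b b_0].
\<close>

section \<open>Caratheodory's theorem for cones\<close>

lemma homogeneous_system_nontrivial_solution:
  fixes A :: "nat \<Rightarrow> 'i \<Rightarrow> 'a::field"
  assumes "finite I" "m < card I"
  shows "\<exists>w. (\<exists>i\<in>I. w i \<noteq> 0) \<and> (\<forall>k<m. (\<Sum>i\<in>I. A k i * w i) = 0)"
  using assms
proof (induction m arbitrary: I A)
  case 0
  then obtain i where "i \<in> I" by fastforce
  then show ?case by (intro exI[of _ "\<lambda>_. 1"]) auto
next
  case (Suc m)
  show ?case
  proof (cases "\<forall>i\<in>I. A m i = 0")
    case True
    with Suc.IH[of I A] Suc.prems show ?thesis by (auto simp: less_Suc_eq)
  next
    case False
    then obtain j where j: "j \<in> I" "A m j \<noteq> 0" by auto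
    \<comment> \<open>Gaussian elimination: clear column \<open>j\<close> from the first \<open>m\<close> equations using equation \<open>m\<close>.\<close>
    define A' where "A' k i = A k i - A k j * A m i / A m j" for k i
    have "m < card (I - {j})" using Suc.prems j by simp
    with Suc.IH[of "I - {j}" A'] Suc.prems(1) obtain w' where
      w': "\<exists>i\<in>I - {j}. w' i \<noteq> 0" "\<forall>k<m. (\<Sum>i\<in>I - {j}. A' k i * w' i) = 0" by auto
    define w where "w = w'(j := - (\<Sum>i\<in>I - {j}. A m i * w' i) / A m j)"
    have wj: "w j = - (\<Sum>i\<in>I - {j}. A m i * w' i) / A m j" by (simp add: w_def)
    have split: "(\<Sum>i\<in>I. A k i * w i) = A k j * w j + (\<Sum>i\<in>I - {j}. A k i * w' i)" for k
      using Suc.prems(1) j(1) by (simp add: sum.remove w_def)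
    have "(\<Sum>i\<in>I. A k i * w i) = (\<Sum>i\<in>I - {j}. A' k i * w' i)" for k
      unfolding split wj using j(2)
      by (simp add: A'_def algebra_simps sum_subtractf sum_distrib_left sum_divide_distrib)
    moreover have "A' m i = 0" for i using j(2) by (simp add: A'_def)
    ultimately have "\<forall>k<Suc m. (\<Sum>i\<in>I. A k i * w i) = 0"
      using w'(2) by (auto simp: less_Suc_eq)
    moreover have "\<exists>i\<in>I. w i \<noteq> 0" using w'(1) by (auto simp: w_def)
    ultimately show ?thesis by blast
  qed
qed

lemma homogeneous_system_negative_solution:
  fixes A :: "nat \<Rightarrow> 'i \<Rightarrow> 'a::linordered_field"
  assumes "finite I" "m < card I"
  obtains w where "\<exists>i\<in>I. w i < 0" "\<forall>k<m. (\<Sum>i\<in>I. A k i * w i) = 0"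
proof -
  obtain w where w: "\<exists>i\<in>I. w i \<noteq> 0" "\<forall>k<m. (\<Sum>i\<in>I. A k i * w i) = 0"
    using homogeneous_system_nontrivial_solution[OF assms] by blast
  show ?thesis
  proof (cases "\<exists>i\<in>I. w i < 0")
    case True
    with w that show ?thesis by blast
  next
    case False
    with w have "\<exists>i\<in>I. - w i < 0" by force
    with w(2) that[of "\<lambda>i. - w i"] show ?thesis by (simp add: sum_negf)
  qed
qed

lemma conic_caratheodory_step:
  fixes x :: "'i \<Rightarrow> nat \<Rightarrow> real"
  assumes I: "finite I" and lam: "\<forall>i\<in>I. 0 \<le> lam i" and card: "m < card I"
  obtains j lam' where "j \<in> I" "\<forall>i\<in>I. 0 \<le> lam' i" "lam' j = 0"
    "\<forall>k<m. (\<Sum>i\<in>I. lam' i * x i k) = (\<Sum>i\<in>I. lam i * x i k)"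
proof -
  obtain w where w: "\<exists>i\<in>I. w i < 0" "\<forall>k<m. (\<Sum>i\<in>I. x i k * w i) = 0"
    using I card by (rule homogeneous_system_negative_solution)
  \<comment> \<open>Move along \<open>w\<close> until the first weight vanishes.\<close>
  define N where "N = {i\<in>I. w i < 0}"
  define j where "j = arg_min_on (\<lambda>i. lam i / - w i) N"
  have N: "finite N" "N \<noteq> {}" using I w(1) by (auto simp: N_def)
  have j: "j \<in> I" "w j < 0" using arg_min_if_finite(1)[OF N] by (auto simp: j_def N_def)
  have j_least: "lam j / - w j \<le> lam i / - w i" if "i \<in> I" "w i < 0" for i
    unfolding j_def by (rule arg_min_least[OF N]) (use that in \<open>simp add: N_def\<close>)
  define t where "t = lam j / - w j"
  have "0 \<le> t" using j lam by (simp add: t_def divide_nonneg_neg)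
  define lam' where "lam' i = lam i + t * w i" for i
  show ?thesis
  proof
    show "j \<in> I" by (fact j(1))
    show "lam' j = 0" using j(2) by (simp add: lam'_def t_def)
    show "\<forall>i\<in>I. 0 \<le> lam' i"
    proof
      fix i assume "i \<in> I"
      show "0 \<le> lam' i"
      proof (cases "w i < 0")
        case True
        with j_least[OF \<open>i \<in> I\<close>] have "t \<le> lam i / - w i" by (simp only: t_def)
        with True have "t * - w i \<le> lam i" by (metis neg_0_less_iff_less pos_le_divide_eq)
        then show ?thesis by (simp add: lam'_def)
      next
        case False
        with \<open>0 \<le> t\<close> \<open>i \<in> I\<close> lam show ?thesis by (simp add: lam'_def)
      qed
    qed
    show "\<forall>k<m. (\<Sum>i\<in>I. lam' i * x i k) = (\<Sum>i\<in>I. lam i * x i k)"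
      using w(2) by (simp add: lam'_def algebra_simps sum.distrib flip: sum_distrib_left)
  qed
qed

lemma conic_caratheodory:
  fixes x :: "'i \<Rightarrow> nat \<Rightarrow> real"
  assumes "finite I" "\<forall>i\<in>I. 0 \<le> lam i"
  obtains J lam' where "J \<subseteq> I" "card J \<le> m" "\<forall>i\<in>J. 0 \<le> lam' i"
    "\<forall>k<m. (\<Sum>i\<in>J. lam' i * x i k) = (\<Sum>i\<in>I. lam i * x i k)"
  using assms
proof (induction "card I" arbitrary: I lam rule: less_induct)
  case less
  show ?case
  proof (cases "card I \<le> m")
    case True
    with less.prems show ?thesis by blast
  next
    case False
    then have "m < card I" by simp
    then obtain j lam' where j: "j \<in> I" "\<forall>i\<in>I. 0 \<le> lam' i" "lam' j = 0"
      "\<forall>k<m. (\<Sum>i\<in>I. lam' i * x i k) = (\<Sum>i\<in>I. lam i * x i k)"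
      by (rule conic_caratheodory_step[OF less.prems(2,3)])
    have "(\<Sum>i\<in>I - {j}. lam' i * x i k) = (\<Sum>i\<in>I. lam' i * x i k)" for k
      using less.prems(2) j(1,3) by (simp add: sum.remove)
    with j(4) have sums: "\<forall>k<m. (\<Sum>i\<in>I - {j}. lam' i * x i k) = (\<Sum>i\<in>I. lam i * x i k)"
      by simp
    show ?thesis
    proof (rule less.hyps[of "I - {j}" lam'])
      show "card (I - {j}) < card I" using less.prems(2) j(1) by (meson card_Diff1_less)
      show "finite (I - {j})" using less.prems(2) by simp
      show "\<forall>i\<in>I - {j}. 0 \<le> lam' i" using j(2) by simp
      fix J lam'' assume J: "J \<subseteq> I - {j}" "card J \<le> m" "\<forall>i\<in>J. 0 \<le> lam'' i"
        "\<forall>k<m. (\<Sum>i\<in>J. lam'' i * x i k) = (\<Sum>i\<in>I - {j}. lam' i * x i k)"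
      show thesis
      proof (rule less.prems(1))
        show "J \<subseteq> I" using J(1) by blast
        show "\<forall>k<m. (\<Sum>i\<in>J. lam'' i * x i k) = (\<Sum>i\<in>I. lam i * x i k)" using J(4) sums by simp
      qed (use J in auto)
    qed
  qed
qed

section \<open>The moment cone of an interval\<close>

definition moment_cone :: "nat \<Rightarrow> real \<Rightarrow> real \<Rightarrow> (nat \<Rightarrow> real) set" where
  "moment_cone m a b = {c. \<exists>(I::nat set) lam tau. finite I \<and> (\<forall>i\<in>I. 0 \<le> lam i \<and> tau i \<in> {a..b}) \<and>
      (\<forall>k\<le>m. c k = (\<Sum>i\<in>I. lam i * tau i ^ k))}"

lemma moment_coneI:
  fixes I :: "nat set"
  assumes "finite I" "\<forall>i\<in>I. 0 \<le> lam i \<and> tau i \<in> {a..b}" "\<forall>k\<le>m. c k = (\<Sum>i\<in>I. lam i * tau i ^ k)"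
  shows "c \<in> moment_cone m a b"
  using assms unfolding moment_cone_def by blast

lemma moment_coneE:
  assumes "c \<in> moment_cone m a b"
  obtains I :: "nat set" and lam tau where "finite I" "\<forall>i\<in>I. 0 \<le> lam i \<and> tau i \<in> {a..b}"
    "\<forall>k\<le>m. c k = (\<Sum>i\<in>I. lam i * tau i ^ k)"
  using assms unfolding moment_cone_def by (auto intro: that)

lemma moment_cone_cong:
  assumes "c \<in> moment_cone m a b" "\<forall>k\<le>m. d k = c k"
  shows "d \<in> moment_cone m a b"
proof -
  obtain I :: "nat set" and lam tau where "finite I" "\<forall>i\<in>I. 0 \<le> lam i \<and> tau i \<in> {a..b}"
    "\<forall>k\<le>m. c k = (\<Sum>i\<in>I. lam i * tau i ^ k)"
    using assms(1) by (rule moment_coneE)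
  with assms(2) show ?thesis by (intro moment_coneI[of I lam tau]) auto
qed

lemma moment_cone_scale:
  assumes "c \<in> moment_cone m a b" "0 \<le> r"
  shows "(\<lambda>k. r * c k) \<in> moment_cone m a b"
proof -
  obtain I :: "nat set" and lam tau where "finite I" "\<forall>i\<in>I. 0 \<le> lam i \<and> tau i \<in> {a..b}"
    "\<forall>k\<le>m. c k = (\<Sum>i\<in>I. lam i * tau i ^ k)"
    using assms(1) by (rule moment_coneE)
  with assms(2) show ?thesis
    by (intro moment_coneI[of I "\<lambda>i. r * lam i" tau]) (auto simp: sum_distrib_left mult.assoc)
qed

lemma moment_cone_add_atom:
  assumes "c \<in> moment_cone m a b" "0 \<le> r" "t \<in> {a..b}"
  shows "(\<lambda>k. c k + r * t ^ k) \<in> moment_cone m a b"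
proof -
  obtain I :: "nat set" and lam tau where I: "finite I" "\<forall>i\<in>I. 0 \<le> lam i \<and> tau i \<in> {a..b}"
    "\<forall>k\<le>m. c k = (\<Sum>i\<in>I. lam i * tau i ^ k)"
    using assms(1) by (rule moment_coneE)
  obtain i0 where "i0 \<notin> I" using I(1) infinite_UNIV_nat by (meson ex_new_if_finite)
  have "(\<Sum>i\<in>I. (lam(i0 := r)) i * (tau(i0 := t)) i ^ k) = (\<Sum>i\<in>I. lam i * tau i ^ k)" for k
    using \<open>i0 \<notin> I\<close> by (intro sum.cong) auto
  with I \<open>i0 \<notin> I\<close> assms(2,3) show ?thesis
    by (intro moment_coneI[of "insert i0 I" "lam(i0 := r)" "tau(i0 := t)"]) auto
qed

lemma moment_cone_Suc_atoms:
  assumes "c \<in> moment_cone m a b" "a \<le> b"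
  obtains lam tau where "\<forall>i\<le>m. 0 \<le> lam i \<and> tau i \<in> {a..b}"
    "\<forall>k\<le>m. c k = (\<Sum>i\<le>m. lam i * tau i ^ k)"
proof -
  obtain I :: "nat set" and lam tau where I: "finite I" "\<forall>i\<in>I. 0 \<le> lam i \<and> tau i \<in> {a..b}"
    "\<forall>k\<le>m. c k = (\<Sum>i\<in>I. lam i * tau i ^ k)"
    using assms(1) by (rule moment_coneE)
  have "\<forall>i\<in>I. 0 \<le> lam i" using I(2) by blast
  then obtain J lam' where J: "J \<subseteq> I" "card J \<le> Suc m" "\<forall>i\<in>J. 0 \<le> lam' i"
    "\<forall>k<Suc m. (\<Sum>i\<in>J. lam' i * tau i ^ k) = (\<Sum>i\<in>I. lam i * tau i ^ k)"
    by (rule conic_caratheodory[OF I(1), of lam "Suc m" "\<lambda>i k. tau i ^ k"])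
  have "finite J" using J(1) I(1) by (rule finite_subset)
  then obtain f where f: "bij_betw f {..<card J} J"
    using ex_bij_betw_nat_finite by (auto simp: atLeast0LessThan)
  have fJ: "f i \<in> J" if "i < card J" for i using f that by (auto simp: bij_betw_def)
  define lam2 where "lam2 i = (if i < card J then lam' (f i) else 0)" for i
  define tau2 where "tau2 i = (if i < card J then tau (f i) else a)" for i
  show ?thesis
  proof
    show "\<forall>i\<le>m. 0 \<le> lam2 i \<and> tau2 i \<in> {a..b}"
      using fJ J(1,3) I(2) assms(2) by (auto simp: lam2_def tau2_def)
    have "(\<Sum>i\<le>m. lam2 i * tau2 i ^ k) = (\<Sum>i\<in>J. lam' i * tau i ^ k)" for k
    proof -
      have "(\<Sum>i\<le>m. lam2 i * tau2 i ^ k) = (\<Sum>i<card J. lam' (f i) * tau (f i) ^ k)"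
        using J(2) by (intro sum.mono_neutral_cong_right) (auto simp: lam2_def tau2_def)
      also have "\<dots> = (\<Sum>i\<in>J. lam' i * tau i ^ k)"
        by (rule sum.reindex_bij_betw[OF f])
      finally show ?thesis .
    qed
    with I(3) J(4) show "\<forall>k\<le>m. c k = (\<Sum>i\<le>m. lam2 i * tau2 i ^ k)" by simp
  qed
qed

lemma compact_PiE:
  fixes S :: "'a \<Rightarrow> 'b::topological_space set"
  assumes "\<And>i. i \<in> I \<Longrightarrow> compact (S i)"
  shows "compact (Pi\<^sub>E I S)"
proof -
  have "Pi\<^sub>E I S = Pi\<^sub>E UNIV (\<lambda>i. if i \<in> I then S i else {undefined})"
    by (auto simp: PiE_def Pi_def extensional_def)
  moreover have "compactin (product_topology (\<lambda>i. euclidean) UNIV) \<dots>"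
    using assms by (subst compactin_PiE) auto
  ultimately show ?thesis by (simp add: euclidean_product_topology)
qed

definition sq_dist :: "nat \<Rightarrow> (nat \<Rightarrow> real) \<Rightarrow> (nat \<Rightarrow> real) \<Rightarrow> real" where
  "sq_dist m u w = (\<Sum>k\<le>m. (u k - w k)\<^sup>2)"

lemma sq_dist_cong: "\<forall>k\<le>m. w k = w' k \<Longrightarrow> sq_dist m u w = sq_dist m u w'"
  by (simp add: sq_dist_def)

lemma weights_le_if_closer_than_0:
  assumes "\<forall>i\<le>m. 0 \<le> lam i" "\<forall>k\<le>m. d k = (\<Sum>i\<le>m. lam i * tau i ^ k)"
    and "sq_dist m v d < sq_dist m v (\<lambda>_. 0)"
  shows "\<forall>i\<le>m. lam i \<le> \<bar>v 0\<bar> + sqrt (sq_dist m v (\<lambda>_. 0))"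
proof (intro allI impI)
  fix i assume "i \<le> m"
  have "(v 0 - d 0)\<^sup>2 \<le> sq_dist m v d"
    unfolding sq_dist_def by (rule member_le_sum) auto
  with assms(3) have "sqrt ((v 0 - d 0)\<^sup>2) \<le> sqrt (sq_dist m v (\<lambda>_. 0))"
    by (intro real_sqrt_le_mono) linarith
  then have "\<bar>v 0 - d 0\<bar> \<le> sqrt (sq_dist m v (\<lambda>_. 0))" by simp
  moreover have "lam i \<le> d 0"
    using assms(1,2) \<open>i \<le> m\<close> by (simp, intro member_le_sum) auto
  ultimately show "lam i \<le> \<bar>v 0\<bar> + sqrt (sq_dist m v (\<lambda>_. 0))" by linarith
qed

lemma moment_cone_nearest_point:
  assumes "a \<le> b"
  obtains c where "c \<in> moment_cone m a b" "\<And>d. d \<in> moment_cone m a b \<Longrightarrow> sq_dist m v c \<le> sq_dist m v d"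
proof -
  define mom where "mom p k = (\<Sum>i\<le>m. fst p i * snd p i ^ k)" for p :: "(nat \<Rightarrow> real) \<times> (nat \<Rightarrow> real)" and k
  \<comment> \<open>Points farther from \<open>v\<close> than \<open>0\<close> are irrelevant; the others have mass at most \<open>B\<close>.\<close>
  define B where "B = \<bar>v 0\<bar> + sqrt (sq_dist m v (\<lambda>_. 0))"
  define S where "S = (\<Pi>\<^sub>E i\<in>{..m}. {0..B}) \<times> (\<Pi>\<^sub>E i\<in>{..m}. {a..b})"
  have "compact S" unfolding S_def by (intro compact_Times compact_PiE compact_Icc)
  moreover have zero: "(\<lambda>i\<in>{..m}. 0, \<lambda>i\<in>{..m}. a) \<in> S"
    using assms by (simp add: S_def B_def sq_dist_def sum_nonneg)
  moreover have "continuous_on S (\<lambda>p. fst p i)" "continuous_on S (\<lambda>p. snd p i)" for i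
    by (rule continuous_on_product_then_coordinatewise, intro continuous_intros)+
  then have "continuous_on S (\<lambda>p. sq_dist m v (mom p))"
    unfolding sq_dist_def mom_def by (intro continuous_intros)
  ultimately obtain p0 where p0: "p0 \<in> S" "\<And>p. p \<in> S \<Longrightarrow> sq_dist m v (mom p0) \<le> sq_dist m v (mom p)"
    using continuous_attains_inf[of S] by blast
  show ?thesis
  proof
    show "mom p0 \<in> moment_cone m a b"
      using p0(1) by (intro moment_coneI[of "{..m}" "fst p0" "snd p0"]) (auto simp: S_def mom_def)
  next
    fix d assume "d \<in> moment_cone m a b"
    then obtain lam tau where lt: "\<forall>i\<le>m. 0 \<le> lam i \<and> tau i \<in> {a..b}"
      "\<forall>k\<le>m. d k = (\<Sum>i\<le>m. lam i * tau i ^ k)"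
      using assms by (rule moment_cone_Suc_atoms)
    show "sq_dist m v (mom p0) \<le> sq_dist m v d"
    proof (cases "sq_dist m v (\<lambda>_. 0) \<le> sq_dist m v d")
      case True
      have "sq_dist m v (mom p0) \<le> sq_dist m v (mom (\<lambda>i\<in>{..m}. 0, \<lambda>i\<in>{..m}. a))"
        by (rule p0(2)[OF zero])
      also have "\<dots> = sq_dist m v (\<lambda>_. 0)" by (rule sq_dist_cong) (simp add: mom_def)
      finally show ?thesis using True by linarith
    next
      case False
      with lt have "\<forall>i\<le>m. lam i \<le> B" unfolding B_def by (intro weights_le_if_closer_than_0) auto
      with lt have "(restrict lam {..m}, restrict tau {..m}) \<in> S" by (force simp: S_def)
      then have "sq_dist m v (mom p0) \<le> sq_dist m v (mom (restrict lam {..m}, restrict tau {..m}))"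
        by (rule p0(2))
      also have "\<dots> = sq_dist m v d" by (rule sq_dist_cong) (simp add: mom_def lt)
      finally show ?thesis .
    qed
  qed
qed

lemma nearest_point_variational_ineq:
  assumes "\<And>\<theta>. 0 < \<theta> \<Longrightarrow> \<theta> < 1 \<Longrightarrow> sq_dist m v c \<le> sq_dist m v (\<lambda>k. c k + \<theta> * d k)"
  shows "0 \<le> (\<Sum>k\<le>m. (c k - v k) * d k)"
proof -
  define A where "A = (\<Sum>k\<le>m. (c k - v k) * d k)"
  define D where "D = (\<Sum>k\<le>m. (d k)\<^sup>2)"
  have expand: "sq_dist m v (\<lambda>k. c k + \<theta> * d k) = sq_dist m v c + \<theta> * (2 * A + \<theta> * D)" for \<theta>
  proof -
    have "sq_dist m v (\<lambda>k. c k + \<theta> * d k) =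
        (\<Sum>k\<le>m. (v k - c k)\<^sup>2 + \<theta> * (2 * ((c k - v k) * d k)) + \<theta> * (\<theta> * (d k)\<^sup>2))"
      unfolding sq_dist_def by (rule sum.cong) (simp_all add: power2_eq_square algebra_simps)
    then show ?thesis
      by (simp add: sq_dist_def A_def D_def sum.distrib distrib_left sum_distrib_left)
  qed
  have "\<forall>\<^sub>F \<theta> in at_right 0. 0 \<le> 2 * A + \<theta> * D"
    using eventually_at_right_real[OF zero_less_one]
  proof eventually_elim
    case (elim \<theta>)
    with assms[of \<theta>] show ?case by (simp add: expand zero_le_mult_iff)
  qed
  moreover have "((\<lambda>\<theta>. 2 * A + \<theta> * D) \<longlongrightarrow> 2 * A + 0 * D) (at_right 0)"
    by (intro tendsto_intros)
  ultimately have "0 \<le> 2 * A" by (intro tendsto_lowerbound[of "\<lambda>\<theta>. 2 * A + \<theta> * D"]) auto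
  then show ?thesis by (simp add: A_def)
qed

definition poly_of_coeffs :: "nat \<Rightarrow> (nat \<Rightarrow> 'a::comm_semiring_1) \<Rightarrow> 'a poly" where
  "poly_of_coeffs m g = (\<Sum>k\<le>m. monom (g k) k)"

lemma coeff_poly_of_coeffs: "coeff (poly_of_coeffs m g) k = (if k \<le> m then g k else 0)"
  by (simp add: poly_of_coeffs_def coeff_sum coeff_monom)

lemma degree_poly_of_coeffs: "degree (poly_of_coeffs m g) \<le> m"
  unfolding poly_of_coeffs_def by (rule degree_sum_le) (auto intro: order_trans[OF degree_monom_le])

lemma poly_poly_of_coeffs: "poly (poly_of_coeffs m g) x = (\<Sum>k\<le>m. g k * x ^ k)"
  by (simp add: poly_of_coeffs_def poly_sum poly_monom)

lemma mom_fun_poly_of_coeffs: "mom_fun m v (poly_of_coeffs m g) = (\<Sum>k\<le>m. g k * v k)"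
  by (simp add: mom_fun_def coeff_poly_of_coeffs)

text \<open>The nearest point \<open>c\<close> of \<open>v\<close> in the moment cone
  satisfies \<open>\<langle>c - v, (t\<^sup>k)\<^sub>k\<rangle> \<ge> 0\<close> for \<open>t \<in> [a, b]\<close> and \<open>\<langle>c - v, c\<rangle> \<le> 0\<close>, so testing \<open>v\<close> on
  the polynomial with coefficients \<open>c - v\<close> gives \<open>\<parallel>c - v\<parallel>\<^sup>2 \<le> 0\<close>.\<close>

lemma positive_on_imp_moment_cone:
  assumes "a \<le> b" "positive_on m v a b"
  shows "v \<in> moment_cone m a b"
proof -
  obtain c where c: "c \<in> moment_cone m a b"
    "\<And>d. d \<in> moment_cone m a b \<Longrightarrow> sq_dist m v c \<le> sq_dist m v d"
    using moment_cone_nearest_point[OF assms(1), where m = m and v = v] by blast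
  define p where "p k = c k - v k" for k
  have "0 \<le> (\<Sum>k\<le>m. p k * t ^ k)" if "t \<in> {a..b}" for t
    unfolding p_def using that
    by (intro nearest_point_variational_ineq c(2) moment_cone_add_atom[OF c(1)]) auto
  then have "nonneg_on (poly_of_coeffs m p) a b"
    by (simp add: nonneg_on_def poly_poly_of_coeffs)
  then have "0 \<le> mom_fun m v (poly_of_coeffs m p)"
    using assms(2) degree_poly_of_coeffs unfolding positive_on_def by blast
  moreover have "0 \<le> (\<Sum>k\<le>m. p k * - c k)"
  proof -
    have "(\<lambda>k. c k + \<theta> * - c k) \<in> moment_cone m a b" if "\<theta> < 1" for \<theta>
      using moment_cone_scale[OF c(1), of "1 - \<theta>"] that by (simp add: algebra_simps)
    then show ?thesis unfolding p_def by (intro nearest_point_variational_ineq c(2)) auto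
  qed
  moreover have "(p k)\<^sup>2 = p k * c k - p k * v k" for k
    by (simp add: p_def power2_eq_square right_diff_distrib)
  ultimately have "(\<Sum>k\<le>m. (p k)\<^sup>2) \<le> 0"
    by (simp add: mom_fun_poly_of_coeffs sum_subtractf sum_negf)
  then have "(\<Sum>k\<le>m. (p k)\<^sup>2) = 0" by (intro antisym sum_nonneg) auto
  then have "\<forall>k\<le>m. p k = 0" by (simp add: sum_nonneg_eq_0_iff)
  then show ?thesis by (intro moment_cone_cong[OF c(1)]) (simp add: p_def)
qed

section \<open>Strict positivity has a margin\<close>

lemma poly_of_coeffs_coeff: "degree P \<le> m \<Longrightarrow> poly_of_coeffs m (coeff P) = P"
  by (rule poly_eqI) (auto simp: coeff_poly_of_coeffs coeff_eq_0)

lemma poly_eq_sum_coeffs: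
  fixes P :: "'a::comm_semiring_1 poly"
  shows "degree P \<le> m \<Longrightarrow> poly P x = (\<Sum>k\<le>m. coeff P k * x ^ k)"
  by (metis poly_of_coeffs_coeff poly_poly_of_coeffs)

lemma mom_fun_eq_0_if_coeffs_0: "\<forall>k\<le>m. coeff P k = 0 \<Longrightarrow> mom_fun m v P = 0"
  by (simp add: mom_fun_def)

definition normalized_nonneg_coeffs :: "nat \<Rightarrow> real \<Rightarrow> real \<Rightarrow> (nat \<Rightarrow> real) set" where
  "normalized_nonneg_coeffs m a b =
    (\<Pi>\<^sub>E k\<in>UNIV. if k \<le> m then {-1..1} else {0}) \<inter> {g. (\<Sum>k\<le>m. \<bar>g k\<bar>) = 1} \<inter>
    (\<Inter>t\<in>{a..b}. {g. 0 \<le> (\<Sum>k\<le>m. g k * t ^ k)})"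

lemma compact_normalized_nonneg_coeffs: "compact (normalized_nonneg_coeffs m a b)"
  unfolding normalized_nonneg_coeffs_def
  by (intro compact_Int_closed compact_PiE compact_Icc closed_Int closed_INT ballI
      closed_Collect_eq closed_Collect_le continuous_intros continuous_on_product_coordinates) auto

lemma normalized_nonneg_coeffs_nonempty: "normalized_nonneg_coeffs m a b \<noteq> {}"
proof -
  let ?e = "\<lambda>k. if k = 0 then 1 else 0 :: real"
  have e1: "?e \<in> (\<Pi>\<^sub>E k\<in>UNIV. if k \<le> m then {-1..1} else {0})"
    unfolding PiE_iff by auto
  have e2: "(\<Sum>k\<le>m. \<bar>?e k\<bar>) = 1" and e3: "(\<Sum>k\<le>m. ?e k * t ^ k) = 1" for t
    by (subst sum.cong[OF refl, where h = ?e]; simp)+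
  have "?e \<in> normalized_nonneg_coeffs m a b"
    unfolding normalized_nonneg_coeffs_def
    by (intro IntI CollectI INT_I e1) (simp_all only: e2 e3 zero_le_one)
  then show ?thesis by blast
qed

lemma nonneg_on_normalized_nonneg_coeffs:
  "g \<in> normalized_nonneg_coeffs m a b \<Longrightarrow> nonneg_on (poly_of_coeffs m g) a b"
  unfolding normalized_nonneg_coeffs_def nonneg_on_def poly_poly_of_coeffs by blast

lemma poly_of_coeffs_normalized_nonneg_coeffs_nonzero:
  assumes "g \<in> normalized_nonneg_coeffs m a b"
  shows "poly_of_coeffs m g \<noteq> 0"
proof
  assume "poly_of_coeffs m g = 0"
  then have "\<forall>k\<le>m. g k = 0" by (metis coeff_0 coeff_poly_of_coeffs)
  with assms show False unfolding normalized_nonneg_coeffs_def by simp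
qed

lemma normalized_coeffs_in_normalized_nonneg_coeffs:
  fixes P :: "real poly"
  assumes P: "degree P \<le> m" "nonneg_on P a b"
    and N: "N = (\<Sum>k\<le>m. \<bar>coeff P k\<bar>)" "0 < N"
  shows "(\<lambda>k. if k \<le> m then coeff P k / N else 0) \<in> normalized_nonneg_coeffs m a b" (is "?g \<in> _")
proof -
  have "\<forall>k\<le>m. \<bar>coeff P k\<bar> \<le> N" unfolding N(1) by (auto intro: member_le_sum)
  moreover have "(\<Sum>k\<le>m. \<bar>?g k\<bar>) = 1"
    using N by (simp add: abs_divide flip: sum_divide_distrib)
  moreover have "(\<Sum>k\<le>m. ?g k * t ^ k) = poly P t / N" for t
    by (simp add: poly_eq_sum_coeffs[OF P(1)] sum_divide_distrib)
  ultimately show ?thesis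
    using N(2) P(2) unfolding normalized_nonneg_coeffs_def PiE_iff nonneg_on_def
    by (auto simp: abs_le_iff le_divide_eq divide_le_eq)
qed

text \<open>\<open>\<delta>\<close> is the minimum of \<open>\<sigma>\<close> over the normalised coefficient vectors.\<close>

lemma strictly_positive_on_margin:
  assumes sp: "strictly_positive_on m v a b"
  obtains \<delta> where "0 < \<delta>"
    "\<And>P. degree P \<le> m \<Longrightarrow> nonneg_on P a b \<Longrightarrow> \<delta> * (\<Sum>k\<le>m. \<bar>coeff P k\<bar>) \<le> mom_fun m v P"
proof -
  let ?S = "normalized_nonneg_coeffs m a b"
  have "continuous_on ?S (\<lambda>g. \<Sum>k\<le>m. g k * v k)"
    by (intro continuous_intros continuous_on_subset[OF continuous_on_product_coordinates]) simp
  then obtain g0 where g0: "g0 \<in> ?S" "\<And>g. g \<in> ?S \<Longrightarrow> (\<Sum>k\<le>m. g0 k * v k) \<le> (\<Sum>k\<le>m. g k * v k)"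
    using continuous_attains_inf[OF compact_normalized_nonneg_coeffs normalized_nonneg_coeffs_nonempty]
    by blast
  show ?thesis
  proof
    from sp g0(1) show "0 < (\<Sum>k\<le>m. g0 k * v k)"
      unfolding strictly_positive_on_def
      by (metis mom_fun_poly_of_coeffs degree_poly_of_coeffs nonneg_on_normalized_nonneg_coeffs
          poly_of_coeffs_normalized_nonneg_coeffs_nonzero)
  next
    fix P :: "real poly" assume P: "degree P \<le> m" "nonneg_on P a b"
    define N where "N = (\<Sum>k\<le>m. \<bar>coeff P k\<bar>)"
    show "(\<Sum>k\<le>m. g0 k * v k) * N \<le> mom_fun m v P"
    proof (cases "N = 0")
      case True
      then show ?thesis by (simp add: N_def sum_nonneg_eq_0_iff mom_fun_eq_0_if_coeffs_0)
    next
      case False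
      then have "0 < N" by (simp add: N_def order_le_neq_trans sum_nonneg)
      then have "(\<Sum>k\<le>m. g0 k * v k) \<le> (\<Sum>k\<le>m. (if k \<le> m then coeff P k / N else 0) * v k)"
        using P N_def by (intro g0(2) normalized_coeffs_in_normalized_nonneg_coeffs) auto
      also have "\<dots> = mom_fun m v P / N" by (simp add: mom_fun_def sum_divide_distrib)
      finally show ?thesis using \<open>0 < N\<close> by (simp add: pos_le_divide_eq)
    qed
  qed
qed

section \<open>Representing measures\<close>

lemma rep_measuresD:
  assumes "M \<in> rep_measures n s a b"
  shows "sets M = sets borel" "finite_measure M" "AE x in M. x \<in> {a..b}"
    "\<And>k. k \<le> n \<Longrightarrow> integral\<^sup>L M (\<lambda>x. x ^ k) = s k"
proof -
  show sets: "sets M = sets borel" and "finite_measure M"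
    and "\<And>k. k \<le> n \<Longrightarrow> integral\<^sup>L M (\<lambda>x. x ^ k) = s k"
    using assms by (auto simp: rep_measures_def)
  have "UNIV - {a..b} \<in> null_sets M"
    using assms sets by (auto simp: rep_measures_def null_sets_def)
  moreover have "space M = UNIV" using sets_eq_imp_space_eq[OF sets] by simp
  ultimately show "AE x in M. x \<in> {a..b}" by (auto intro: AE_I')
qed

lemma integrable_rep_measure:
  fixes f :: "real \<Rightarrow> real"
  assumes M: "M \<in> rep_measures n s a b"
    and f: "continuous_on {a..b} f" "f \<in> borel_measurable borel"
  shows "integrable M f"
proof -
  obtain B where "\<forall>x\<in>{a..b}. norm (f x) \<le> B"
    using compact_imp_bounded[OF compact_continuous_image[OF f(1) compact_Icc]]
    by (auto simp: bounded_iff)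
  then have "AE x in M. norm (f x) \<le> B" using rep_measuresD(3)[OF M] by auto
  moreover have "f \<in> borel_measurable M" using f(2) measurable_cong_sets[OF rep_measuresD(1)[OF M]] by blast
  ultimately show ?thesis by (rule finite_measure.integrable_const_bound[OF rep_measuresD(2)[OF M]])
qed

lemma borel_measurable_poly [measurable]: "(\<lambda>x. poly P x) \<in> borel_measurable borel"
  for P :: "real poly"
  by (intro borel_measurable_continuous_onI continuous_intros)

lemma mom_fun_eq_integral:
  assumes M: "M \<in> rep_measures n s a b" and Q: "degree Q \<le> n"
  shows "mom_fun n s Q = (\<integral>x. poly Q x \<partial>M)"
proof -
  have int: "integrable M (\<lambda>x. coeff Q k * x ^ k)" for k
    by (rule integrable_rep_measure[OF M]) (intro continuous_intros, measurable)
  have "(\<integral>x. poly Q x \<partial>M) = (\<integral>x. (\<Sum>k\<le>n. coeff Q k * x ^ k) \<partial>M)"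
    by (simp add: poly_eq_sum_coeffs[OF Q])
  also have "\<dots> = (\<Sum>k\<le>n. \<integral>x. coeff Q k * x ^ k \<partial>M)"
    by (rule Bochner_Integration.integral_sum) (use int in auto)
  also have "\<dots> = mom_fun n s Q" using rep_measuresD(4)[OF M] by (simp add: mom_fun_def)
  finally show ?thesis ..
qed

lemma
  fixes w tau :: "'i \<Rightarrow> real"
  assumes I: "finite I" and w: "\<forall>i\<in>I. 0 \<le> w i"
  defines "M \<equiv> distr (point_measure I (\<lambda>i. ennreal (w i))) borel tau"
  shows finite_measure_distr_point_measure: "finite_measure M"
    and integral_distr_point_measure:
      "\<And>f. f \<in> borel_measurable borel \<Longrightarrow> integral\<^sup>L M f = (\<Sum>i\<in>I. w i * f (tau i))"
proof -
  let ?N = "point_measure I (\<lambda>i. ennreal (w i))"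
  have tau: "tau \<in> ?N \<rightarrow>\<^sub>M borel"
    by (simp add: point_measure_def measurable_count_space_eq1)
  have "emeasure ?N (space ?N) = (\<Sum>i\<in>I. ennreal (w i))"
    using I by (simp add: emeasure_point_measure_finite space_point_measure)
  then have "finite_measure ?N" by (intro finite_measureI) (simp add: sum_ennreal w)
  then show "finite_measure M" unfolding M_def by (rule finite_measure.finite_measure_distr[OF _ tau])
  fix f :: "real \<Rightarrow> real" assume f: "f \<in> borel_measurable borel"
  have "integral\<^sup>L M f = integral\<^sup>L ?N (\<lambda>i. f (tau i))"
    unfolding M_def by (rule integral_distr[OF tau f])
  also have "\<dots> = integral\<^sup>L (count_space I) (\<lambda>i. w i * f (tau i))"
    unfolding point_measure_def using w by (subst integral_density) (auto simp: AE_count_space)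
  also have "\<dots> = (\<Sum>i\<in>I. w i * f (tau i))" by (simp add: lebesgue_integral_count_space_finite[OF I])
  finally show "integral\<^sup>L M f = (\<Sum>i\<in>I. w i * f (tau i))" .
qed

lemma distr_point_measure_in_rep_measures:
  fixes w tau :: "'i \<Rightarrow> real"
  assumes I: "finite I" and w: "\<forall>i\<in>I. 0 \<le> w i \<and> tau i \<in> {a..b}"
    and mom: "\<forall>k\<le>n. (\<Sum>i\<in>I. w i * tau i ^ k) = s k"
  shows "distr (point_measure I (\<lambda>i. ennreal (w i))) borel tau \<in> rep_measures n s a b"
    (is "?M \<in> _")
proof -
  let ?N = "point_measure I (\<lambda>i. ennreal (w i))"
  have tau: "tau \<in> ?N \<rightarrow>\<^sub>M borel"
    by (simp add: point_measure_def measurable_count_space_eq1)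
  have "emeasure ?M (UNIV - {a..b}) = emeasure ?N (tau -` (UNIV - {a..b}) \<inter> space ?N)"
    by (rule emeasure_distr[OF tau]) simp
  also have "tau -` (UNIV - {a..b}) \<inter> space ?N = {}" using w by (auto simp: space_point_measure)
  finally have "emeasure ?M (UNIV - {a..b}) = 0" by simp
  moreover have "integral\<^sup>L ?M (\<lambda>x. x ^ k) = s k" if "k \<le> n" for k
    using I w mom that by (subst integral_distr_point_measure) auto
  ultimately show ?thesis
    using I w finite_measure_distr_point_measure[OF I, of w tau] by (auto simp: rep_measures_def)
qed

lemma t_1_le_t_ab: "0 < a \<Longrightarrow> a < b \<Longrightarrow> b \<le> 1 \<Longrightarrow> t_1 n s \<le> t_ab n s a b"
  unfolding t_1_def by (rule INF_lower2[of "(a, b)"]) auto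

lemma t_ab_le_integral: "M \<in> rep_measures n s a b \<Longrightarrow> t_ab n s a b \<le> ereal (\<integral>t. 1 / t \<partial>M)"
  unfolding t_ab_def by (rule INF_lower)

lemma t_1_lessE:
  assumes "t_1 n s < x"
  obtains a b M where "0 < a" "a < b" "b \<le> 1" "M \<in> rep_measures n s a b"
    "ereal (\<integral>t. 1 / t \<partial>M) < x"
  using assms unfolding t_1_def t_ab_def by (auto simp: INF_less_iff)

section \<open>Adjoining the moment of order -1\<close>

lemma mom_fun_Suc_case_nat: "mom_fun (Suc n) (case_nat x s) (pCons p0 Q) = p0 * x + mom_fun n s Q"
  unfolding mom_fun_def by (subst sum.atMost_Suc_shift) simp

lemma positive_on_case_nat_diff:
  assumes margin: "\<And>P. degree P \<le> Suc n \<Longrightarrow> nonneg_on P a b \<Longrightarrow>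
      \<delta> * (\<Sum>k\<le>Suc n. \<bar>coeff P k\<bar>) \<le> mom_fun (Suc n) (case_nat x s) P"
    and "0 \<le> \<delta>"
  shows "positive_on (Suc n) (case_nat (x - \<delta>) s) a b"
  unfolding positive_on_def
proof (intro allI impI, elim conjE)
  fix P assume P: "degree P \<le> Suc n" "nonneg_on P a b"
  obtain p0 Q where PQ: "P = pCons p0 Q" by (cases P)
  have "p0 \<le> (\<Sum>k\<le>Suc n. \<bar>coeff P k\<bar>)"
    using member_le_sum[of 0 "{..Suc n}" "\<lambda>k. \<bar>coeff P k\<bar>"] by (simp add: PQ)
  with \<open>0 \<le> \<delta>\<close> have "\<delta> * p0 \<le> \<delta> * (\<Sum>k\<le>Suc n. \<bar>coeff P k\<bar>)" by (simp add: mult_left_mono)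
  also have "\<dots> \<le> mom_fun (Suc n) (case_nat x s) P" using P by (rule margin)
  also have "\<dots> = mom_fun (Suc n) (case_nat (x - \<delta>) s) P + \<delta> * p0"
    by (simp add: PQ mom_fun_Suc_case_nat algebra_simps)
  finally show "0 \<le> mom_fun (Suc n) (case_nat (x - \<delta>) s) P" by simp
qed

lemma moment_cone_case_natE:
  assumes "case_nat y s \<in> moment_cone (Suc n) a b" "0 < a"
  obtains M where "M \<in> rep_measures n s a b" "(\<integral>t. 1 / t \<partial>M) = y"
proof -
  obtain I :: "nat set" and lam tau where rep: "finite I" "\<forall>i\<in>I. 0 \<le> lam i \<and> tau i \<in> {a..b}"
    "\<forall>k\<le>Suc n. case_nat y s k = (\<Sum>i\<in>I. lam i * tau i ^ k)"
    using assms(1) by (rule moment_coneE)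
  \<comment> \<open>Shifting the index by one multiplies each weight by its atom.\<close>
  define M where "M = distr (point_measure I (\<lambda>i. ennreal (lam i * tau i))) borel tau"
  have w: "\<forall>i\<in>I. 0 \<le> lam i * tau i \<and> tau i \<in> {a..b}" using rep(2) assms(2) by auto
  show ?thesis
  proof
    show "M \<in> rep_measures n s a b"
      unfolding M_def
    proof (rule distr_point_measure_in_rep_measures[OF rep(1) w], intro allI impI)
      fix k assume "k \<le> n"
      then show "(\<Sum>i\<in>I. lam i * tau i * tau i ^ k) = s k"
        using rep(3)[rule_format, of "Suc k"] by (simp add: mult.assoc)
    qed
    have "(\<integral>t. 1 / t \<partial>M) = (\<Sum>i\<in>I. lam i * tau i * (1 / tau i))"
      unfolding M_def using rep(1) w by (intro integral_distr_point_measure) auto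
    also have "\<dots> = (\<Sum>i\<in>I. lam i * tau i ^ 0)"
      using rep(2) assms(2) by (intro sum.cong) auto
    finally show "(\<integral>t. 1 / t \<partial>M) = y" using rep(3)[rule_format, of 0] by simp
  qed
qed

lemma t_1_less_if_strictly_positive_01_Suc:
  assumes "strictly_positive_01 (Suc n) (case_nat sm1 s)"
  shows "t_1 n s < ereal sm1"
proof -
  obtain a b where ab: "0 < a" "a < b" "b \<le> 1"
    and sp: "strictly_positive_on (Suc n) (case_nat sm1 s) a b"
    using assms by (auto simp: strictly_positive_01_def)
  obtain \<delta> where \<delta>: "0 < \<delta>" "\<And>P. degree P \<le> Suc n \<Longrightarrow> nonneg_on P a b \<Longrightarrow>
      \<delta> * (\<Sum>k\<le>Suc n. \<bar>coeff P k\<bar>) \<le> mom_fun (Suc n) (case_nat sm1 s) P"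
    using strictly_positive_on_margin[OF sp] by blast
  have "positive_on (Suc n) (case_nat (sm1 - \<delta>) s) a b"
    using \<delta> by (intro positive_on_case_nat_diff) auto
  then have "case_nat (sm1 - \<delta>) s \<in> moment_cone (Suc n) a b"
    using ab by (intro positive_on_imp_moment_cone) auto
  then obtain M where M: "M \<in> rep_measures n s a b" "(\<integral>t. 1 / t \<partial>M) = sm1 - \<delta>"
    using ab(1) by (rule moment_cone_case_natE)
  have "t_1 n s \<le> t_ab n s a b" using ab by (rule t_1_le_t_ab)
  also have "\<dots> \<le> ereal (sm1 - \<delta>)" using t_ab_le_integral[OF M(1)] by (simp add: M(2))
  also have "\<dots> < ereal sm1" using \<delta>(1) by simp
  finally show ?thesis .
qed

lemma nonneg_on_mono: "nonneg_on P a b \<Longrightarrow> a \<le> a' \<Longrightarrow> b' \<le> b \<Longrightarrow> nonneg_on P a' b'"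
  by (auto simp: nonneg_on_def)

lemma nonneg_on_pCons_nonpos:
  assumes "0 < a" "p0 \<le> 0" "nonneg_on (pCons p0 Q) a b"
  shows "nonneg_on Q a b"
  unfolding nonneg_on_def
proof
  fix t assume t: "t \<in> {a..b}"
  with assms(3) have "0 \<le> p0 + t * poly Q t" by (simp add: nonneg_on_def)
  with assms(2) have "0 \<le> t * poly Q t" by linarith
  with t assms(1) show "0 \<le> poly Q t" by (simp add: zero_le_mult_iff)
qed

lemma poly_le_sum_abs_coeffs:
  fixes Q :: "real poly"
  assumes "degree Q \<le> n" "\<bar>t\<bar> \<le> 1"
  shows "poly Q t \<le> (\<Sum>k\<le>n. \<bar>coeff Q k\<bar>)"
proof -
  have "coeff Q k * t ^ k \<le> \<bar>coeff Q k\<bar>" for k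
  proof -
    have "\<bar>coeff Q k * t ^ k\<bar> \<le> \<bar>coeff Q k\<bar> * 1"
      unfolding abs_mult power_abs using assms(2) by (intro mult_left_mono power_le_one) auto
    then show ?thesis by simp
  qed
  then show ?thesis by (simp add: poly_eq_sum_coeffs[OF assms(1)] sum_mono)
qed

text \<open>For a representing measure \<open>\<mu>\<close> of \<open>s\<close> on \<open>[a, b] \<subseteq> (0, \<infinity>)\<close> one has
  \<open>p\<^sub>0 \<integral>1/t d\<mu> + \<sigma>(Q) = \<integral>(p\<^sub>0 + t Q(t))/t d\<mu>\<close>.\<close>

lemma inverse_moment_plus_mom_fun_nonneg:
  assumes M: "M \<in> rep_measures n s a b" and "0 < a" "degree Q \<le> n"
    and P: "nonneg_on (pCons p0 Q) a b"
  shows "0 \<le> p0 * (\<integral>t. 1 / t \<partial>M) + mom_fun n s Q"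
proof -
  have "integrable M (\<lambda>t. 1 / t)" "integrable M (\<lambda>t. poly Q t)"
    using \<open>0 < a\<close> by (auto intro!: integrable_rep_measure[OF M] continuous_intros)
  then have "p0 * (\<integral>t. 1 / t \<partial>M) + mom_fun n s Q = (\<integral>t. p0 * (1 / t) + poly Q t \<partial>M)"
    by (simp only: Bochner_Integration.integral_add integrable_mult_right integral_mult_right_zero
        mom_fun_eq_integral[OF M \<open>degree Q \<le> n\<close>])
  also have "\<dots> \<ge> 0"
  proof (rule integral_nonneg_AE)
    show "AE t in M. 0 \<le> p0 * (1 / t) + poly Q t"
      using rep_measuresD(3)[OF M]
    proof eventually_elim
      case (elim t)
      with \<open>0 < a\<close> P have "0 < t" "0 \<le> p0 + t * poly Q t" by (auto simp: nonneg_on_def)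
      then show ?case by (simp add: field_simps)
    qed
  qed
  finally show ?thesis .
qed

text \<open>Evaluating \<open>P = p\<^sub>0 + x Q \<ge> 0\<close> at \<open>\<alpha>\<close> gives \<open>-p\<^sub>0 \<le> \<alpha> Q(\<alpha>) \<le> \<alpha> \<parallel>Q\<parallel>\<^sub>1\<close>, and the margin
  gives \<open>\<delta> \<parallel>Q\<parallel>\<^sub>1 \<le> \<sigma>(Q)\<close>.\<close>

lemma margin_dominates_negative_constant:
  assumes margin: "\<And>Q. degree Q \<le> n \<Longrightarrow> nonneg_on Q a0 b0 \<Longrightarrow>
      \<delta> * (\<Sum>k\<le>n. \<bar>coeff Q k\<bar>) \<le> mom_fun n s Q"
    and "0 < \<delta>" "0 < \<alpha>" "\<alpha> \<le> a0" "b0 \<le> \<beta>" "\<alpha> \<le> \<beta>" "\<alpha> \<le> 1" "\<alpha> * x < \<delta>"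
    and "p0 < 0" "degree Q \<le> n" and P: "nonneg_on (pCons p0 Q) \<alpha> \<beta>"
  shows "0 < p0 * x + mom_fun n s Q"
proof -
  have "nonneg_on Q a0 b0"
    using nonneg_on_pCons_nonpos[OF \<open>0 < \<alpha>\<close> _ P] assms by (auto intro: nonneg_on_mono)
  have "0 \<le> p0 + \<alpha> * poly Q \<alpha>" using P \<open>\<alpha> \<le> \<beta>\<close> by (simp add: nonneg_on_def)
  then have "- p0 \<le> \<alpha> * poly Q \<alpha>" by linarith
  have "\<alpha> * x * - p0 < \<delta> * - p0" using assms by (intro mult_strict_right_mono) auto
  also have "\<dots> \<le> \<delta> * (\<alpha> * poly Q \<alpha>)"
    using \<open>- p0 \<le> \<alpha> * poly Q \<alpha>\<close> \<open>0 < \<delta>\<close> by (intro mult_left_mono) auto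
  also have "\<dots> = \<alpha> * (\<delta> * poly Q \<alpha>)" by simp
  also have "\<dots> \<le> \<alpha> * (\<delta> * (\<Sum>k\<le>n. \<bar>coeff Q k\<bar>))"
    using assms by (intro mult_left_mono poly_le_sum_abs_coeffs) auto
  also have "\<dots> \<le> \<alpha> * mom_fun n s Q"
    using assms margin[OF _ \<open>nonneg_on Q a0 b0\<close>] by (intro mult_left_mono) auto
  finally have "0 < \<alpha> * (p0 * x + mom_fun n s Q)" by (simp add: algebra_simps)
  with \<open>0 < \<alpha>\<close> show ?thesis by (simp add: zero_less_mult_iff)
qed

lemma mom_fun_case_nat_pos:
  assumes sp: "strictly_positive_on n s a0 b0"
    and margin: "\<And>Q. degree Q \<le> n \<Longrightarrow> nonneg_on Q a0 b0 \<Longrightarrow>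
      \<delta> * (\<Sum>k\<le>n. \<bar>coeff Q k\<bar>) \<le> mom_fun n s Q"
    and M: "M \<in> rep_measures n s a b" "(\<integral>t. 1 / t \<partial>M) < x"
    and \<alpha>: "0 < \<alpha>" "\<alpha> \<le> a" "\<alpha> \<le> a0" "\<alpha> \<le> \<beta>" "\<alpha> \<le> 1" "\<alpha> * x < \<delta>"
    and \<beta>: "b \<le> \<beta>" "b0 \<le> \<beta>"
    and "0 < \<delta>"
    and P: "degree P \<le> Suc n" "nonneg_on P \<alpha> \<beta>" "P \<noteq> 0"
  shows "0 < mom_fun (Suc n) (case_nat x s) P"
proof -
  obtain p0 Q where PQ: "P = pCons p0 Q" by (cases P)
  have Q: "degree Q \<le> n" using P(1) by (simp add: PQ degree_pCons_eq_if split: if_splits)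
  consider "p0 < 0" | "p0 = 0" | "0 < p0" by linarith
  then have "0 < p0 * x + mom_fun n s Q"
  proof cases
    case 1
    with margin_dominates_negative_constant[OF margin \<open>0 < \<delta>\<close> \<alpha>(1,3) \<beta>(2) \<alpha>(4,5,6)] Q P(2)
    show ?thesis by (simp add: PQ)
  next
    case 2
    then have "Q \<noteq> 0" "nonneg_on Q a0 b0"
      using P \<alpha> \<beta> nonneg_on_pCons_nonpos[of \<alpha> p0 Q \<beta>] by (auto simp: PQ intro: nonneg_on_mono)
    with sp Q 2 show ?thesis by (simp add: strictly_positive_on_def)
  next
    case 3
    have "nonneg_on (pCons p0 Q) a b" using P(2) \<alpha> \<beta> by (auto simp: PQ intro: nonneg_on_mono)
    then have "0 \<le> p0 * (\<integral>t. 1 / t \<partial>M) + mom_fun n s Q"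
      by (rule inverse_moment_plus_mom_fun_nonneg[OF M(1) order.strict_trans2[OF \<alpha>(1,2)] Q])
    moreover have "p0 * (\<integral>t. 1 / t \<partial>M) < p0 * x" using 3 M(2) by simp
    ultimately show ?thesis by linarith
  qed
  then show ?thesis by (simp add: PQ mom_fun_Suc_case_nat)
qed

lemma strictly_positive_01_Suc_if_t_1_less:
  assumes "strictly_positive_01 n s" "t_1 n s < ereal sm1"
  shows "strictly_positive_01 (Suc n) (case_nat sm1 s)"
proof -
  obtain a0 b0 where ab0: "0 < a0" "a0 < b0" "b0 \<le> 1" and sp: "strictly_positive_on n s a0 b0"
    using assms(1) by (auto simp: strictly_positive_01_def)
  obtain \<delta> where \<delta>: "0 < \<delta>"
    "\<And>Q. degree Q \<le> n \<Longrightarrow> nonneg_on Q a0 b0 \<Longrightarrow> \<delta> * (\<Sum>k\<le>n. \<bar>coeff Q k\<bar>) \<le> mom_fun n s Q"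
    using strictly_positive_on_margin[OF sp] by blast
  obtain a b M where ab: "0 < a" "a < b" "b \<le> 1" and M: "M \<in> rep_measures n s a b"
    "(\<integral>t. 1 / t \<partial>M) < sm1"
    using assms(2) by (rule t_1_lessE) auto
  define \<alpha> where "\<alpha> = min (min a a0) (\<delta> / (\<bar>sm1\<bar> + 1))"
  define \<beta> where "\<beta> = max b b0"
  have \<alpha>: "0 < \<alpha>" "\<alpha> \<le> a" "\<alpha> \<le> a0" "\<alpha> < \<beta>" "\<alpha> \<le> 1"
    and \<beta>: "b \<le> \<beta>" "b0 \<le> \<beta>" "\<beta> \<le> 1"
    using ab ab0 \<delta>(1) by (auto simp: \<alpha>_def \<beta>_def)
  have "\<alpha> * sm1 < \<delta>"
  proof -
    have "\<alpha> \<le> \<delta> / (\<bar>sm1\<bar> + 1)" by (simp add: \<alpha>_def)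
    then have "\<alpha> * (\<bar>sm1\<bar> + 1) \<le> \<delta>" by (subst (asm) pos_le_divide_eq) auto
    moreover have "\<alpha> * sm1 < \<alpha> * (\<bar>sm1\<bar> + 1)" using \<alpha>(1) by (intro mult_strict_left_mono) auto
    ultimately show ?thesis by linarith
  qed
  with mom_fun_case_nat_pos[OF sp \<delta>(2) M \<alpha>(1-3) less_imp_le[OF \<alpha>(4)] \<alpha>(5) _ \<beta>(1,2) \<delta>(1)]
  have "strictly_positive_on (Suc n) (case_nat sm1 s) \<alpha> \<beta>"
    by (fastforce simp: strictly_positive_on_def positive_on_def mom_fun_def less_imp_le)
  with \<alpha> \<beta> show ?thesis by (auto simp: strictly_positive_01_def)
qed

theorem theorem8p4:
  fixes n :: nat and s :: "nat \<Rightarrow> real" and sm1 :: real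
  assumes "\<forall>k\<le>n. s k \<ge> 0"
    and "strictly_positive_01 n s"
    and "sm1 \<ge> 0"
  shows "strictly_positive_01 (Suc n) (case_nat sm1 s) \<longleftrightarrow> t_1 n s < ereal sm1"
  using t_1_less_if_strictly_positive_01_Suc strictly_positive_01_Suc_if_t_1_less[OF assms(2)]
  by blast

end
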